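(* Let $S$ be a finite set of points in $\mathbb{R}^d$ with Euclidean distance, $f\ge0$ an integer, $0<\theta<\pi/4$, $\mathcal{C}$ a cone collection as in the context, and $\Theta=\Theta(\theta,2f+1)$. Let $F$ be a set of edges of $\Theta$ such that $(S,F)$ has maximum degree at most $f$. Let $\{p,q\}$ be an edge of $K_S\setminus F$ that is not an edge of $\Theta$, and let $C\in\mathcal{C}$ be a cone with $q\in C+p$. Then there is a point $r\in S_{p,C}$ such that: $r\ne q$; the orthogonal projection of $r$ onto the ray $\ell_C+p$ is at least as close to $p$ as the orthogonal projection of $q$ onto $\ell_C+p$; $\{p,r\}$ is an edge of $\Theta\setminus F$; and $\{r,q\}$ is an edge of $K_S\setminus F$.
   Context: $K_S$ is the complete graph on $S$ with edge weights the Euclidean distances; $X\setminus F$ is $X$ with the edges of $F$ removed. $\mathcal{C}$ is a finite collection of cones with apex at the origin covering $\mathbb{R}^d$, each of angular diameter at most $\theta$, i.e. $\max\{\angle(0x,0y):x,y\in C\setminus\{0\}\}\le\theta$. For each $C\in\mathcal{C}$ fix a ray $\ell_C$ from the origin contained in $C$. For $p\in S$: $C+p=\{x+p:x\in C\}$, $\ell_C+p$ is the translate of $\ell_C$ emanating from $p$, and $S_{p,C}=(C+p)\cap(S\setminus\{p\})$. The graph $\Theta(\theta,k)$ has vertex set $S$, and for each $p\in S$ and $C\in\mathcal{C}$ it contains an edge from $p$ to each of $\min(k,|S_{p,C}|)$ points of $S_{p,C}$ whose orthogonal projections onto $\ell_C+p$ are closest to $p$ (ties broken arbitrarily). *)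

theory Defs
  imports "HOL-Analysis.Analysis"
begin

definition vec_angle :: "'a::euclidean_space \<Rightarrow> 'a \<Rightarrow> real" where
  "vec_angle x y = arccos ((x \<bullet> y) / (norm x * norm y))"

definition is_cone0 :: "'a::euclidean_space set \<Rightarrow> bool" where
  "is_cone0 C \<longleftrightarrow> 0 \<in> C \<and> (\<forall>x\<in>C. \<forall>t::real. t \<ge> 0 \<longrightarrow> t *\<^sub>R x \<in> C)"

text \<open>A finite collection of cones covering the space, each of angular diameter at most
  theta, together with a choice of ray (given by unit direction u C) inside each cone.\<close>
definition cone_collection :: "real \<Rightarrow> 'a::euclidean_space set set \<Rightarrow> ('a set \<Rightarrow> 'a) \<Rightarrow> bool" where
  "cone_collection \<theta> Cs u \<longleftrightarrow>
     finite Cs \<and> \<Union>Cs = UNIV \<and>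
     (\<forall>C\<in>Cs. is_cone0 C \<and>
        (\<forall>x\<in>C - {0}. \<forall>y\<in>C - {0}. vec_angle x y \<le> \<theta>) \<and>
        norm (u C) = 1 \<and> (\<forall>t::real. t \<ge> 0 \<longrightarrow> t *\<^sub>R u C \<in> C))"

definition cone_at :: "'a::euclidean_space set \<Rightarrow> 'a \<Rightarrow> 'a set" where
  "cone_at C p = (\<lambda>x. x + p) ` C"

definition S_pC :: "'a::euclidean_space set \<Rightarrow> 'a \<Rightarrow> 'a set \<Rightarrow> 'a set" where
  "S_pC S p C = cone_at C p \<inter> (S - {p})"

definition ray_proj :: "'a::euclidean_space \<Rightarrow> 'a \<Rightarrow> 'a \<Rightarrow> 'a" where
  "ray_proj p v x = p + max 0 ((x - p) \<bullet> v) *\<^sub>R v"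

text \<open>nbr p C is a valid choice of the (at most k) points of S_{p,C} whose projections onto
  the ray l_C + p are closest to p (ties broken arbitrarily).\<close>
definition theta_choice ::
  "'a::euclidean_space set \<Rightarrow> 'a set set \<Rightarrow> ('a set \<Rightarrow> 'a) \<Rightarrow> nat \<Rightarrow> ('a \<Rightarrow> 'a set \<Rightarrow> 'a set) \<Rightarrow> bool" where
  "theta_choice S Cs u k nbr \<longleftrightarrow>
     (\<forall>p\<in>S. \<forall>C\<in>Cs.
        nbr p C \<subseteq> S_pC S p C \<and>
        card (nbr p C) = min k (card (S_pC S p C)) \<and>
        (\<forall>x\<in>nbr p C. \<forall>y\<in>S_pC S p C - nbr p C.
            dist p (ray_proj p (u C) x) \<le> dist p (ray_proj p (u C) y)))"

definition theta_edges ::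
  "'a::euclidean_space set \<Rightarrow> 'a set set \<Rightarrow> ('a \<Rightarrow> 'a set \<Rightarrow> 'a set) \<Rightarrow> 'a set set" where
  "theta_edges S Cs nbr = {{p, q} | p q. p \<in> S \<and> (\<exists>C\<in>Cs. q \<in> nbr p C)}"

definition KS_edges :: "'a set \<Rightarrow> 'a set set" where
  "KS_edges S = {{p, q} | p q. p \<in> S \<and> q \<in> S \<and> p \<noteq> q}"

definition max_degree_le :: "'a set \<Rightarrow> 'a set set \<Rightarrow> nat \<Rightarrow> bool" where
  "max_degree_le S F f \<longleftrightarrow> (\<forall>v\<in>S. card {e\<in>F. v \<in> e} \<le> f)"

end

theory Submission
  imports Defs
begin

text \<open>Since q is a point of S_{p,C} that p did not choose, p chose the full quota of
  2f+1 points of S_{p,C}, all with projections no farther from p than that of q. At most f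
  of them are joined to p by an edge of F and at most f to q, so one remains.\<close>

lemma finite_S_pC: "finite S \<Longrightarrow> finite (S_pC S p C)"
  unfolding S_pC_def by auto

lemma theta_edges_subset_Pow:
  assumes "theta_choice S Cs u k nbr"
  shows "theta_edges S Cs nbr \<subseteq> Pow S"
proof
  fix e assume "e \<in> theta_edges S Cs nbr"
  then obtain a b C where e: "e = {a, b}" "a \<in> S" "C \<in> Cs" "b \<in> nbr a C"
    unfolding theta_edges_def by blast
  with assms have "b \<in> S_pC S a C"
    unfolding theta_choice_def by blast
  with e show "e \<in> Pow S"
    unfolding S_pC_def by auto
qed

lemma card_nbr_eq_quota:
  assumes "theta_choice S Cs u k nbr" "finite S" "p \<in> S" "C \<in> Cs"
    and "q \<in> S_pC S p C" "q \<notin> nbr p C"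
  shows "card (nbr p C) = k"
proof (rule ccontr)
  have sub: "nbr p C \<subseteq> S_pC S p C" and card: "card (nbr p C) = min k (card (S_pC S p C))"
    using assms(1,3,4) unfolding theta_choice_def by blast+
  assume "card (nbr p C) \<noteq> k"
  with card have "card (nbr p C) = card (S_pC S p C)" by linarith
  with sub finite_S_pC[OF assms(2)] have "nbr p C = S_pC S p C"
    by (simp add: card_subset_eq)
  with assms(5,6) show False by simp
qed

lemma card_F_neighbours_le:
  assumes "max_degree_le S F f" "finite F" "v \<in> S"
  shows "card {r \<in> A. {v, r} \<in> F} \<le> f"
proof -
  have "card {r \<in> A. {v, r} \<in> F} \<le> card {e \<in> F. v \<in> e}"
    by (rule card_inj_on_le[where f = "\<lambda>r. {v, r}"])
       (auto simp: inj_on_def doubleton_eq_iff assms(2))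
  also have "\<dots> \<le> f"
    using assms(1,3) unfolding max_degree_le_def by blast
  finally show ?thesis .
qed

lemma exists_avoiding_two_small_sets:
  assumes "finite N" "card {r \<in> N. P r} + card {r \<in> N. Q r} < card N"
  shows "\<exists>r \<in> N. \<not> P r \<and> \<not> Q r"
proof (rule ccontr)
  assume "\<not> ?thesis"
  then have "N \<subseteq> {r \<in> N. P r} \<union> {r \<in> N. Q r}" by blast
  then have "card N \<le> card ({r \<in> N. P r} \<union> {r \<in> N. Q r})"
    using assms(1) by (intro card_mono) auto
  also have "\<dots> \<le> card {r \<in> N. P r} + card {r \<in> N. Q r}"
    by (rule card_Un_le)
  finally show False using assms(2) by linarith
qed

theorem lemma10:
  fixes S :: "'a::euclidean_space set"
    and f :: nat and \<theta> :: real
    and Cs :: "'a set set" and u :: "'a set \<Rightarrow> 'a"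
    and nbr :: "'a \<Rightarrow> 'a set \<Rightarrow> 'a set"
    and F :: "'a set set" and p q :: 'a and C :: "'a set"
  assumes "finite S"
    and "0 < \<theta>" and "\<theta> < pi / 4"
    and "cone_collection \<theta> Cs u"
    and "theta_choice S Cs u (2 * f + 1) nbr"
    and "F \<subseteq> theta_edges S Cs nbr"
    and "max_degree_le S F f"
    and "{p, q} \<in> KS_edges S - F"
    and "{p, q} \<notin> theta_edges S Cs nbr"
    and "C \<in> Cs" and "q \<in> cone_at C p"
  shows "\<exists>r \<in> S_pC S p C.
           r \<noteq> q \<and>
           dist p (ray_proj p (u C) r) \<le> dist p (ray_proj p (u C) q) \<and>
           {p, r} \<in> theta_edges S Cs nbr - F \<and>
           {r, q} \<in> KS_edges S - F"
proof -
  have pq: "p \<in> S" "q \<in> S" "p \<noteq> q"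
    using assms(8) unfolding KS_edges_def by (auto simp: doubleton_eq_iff)
  have q_S_pC: "q \<in> S_pC S p C" and q_not_nbr: "q \<notin> nbr p C"
    using pq assms(9-11) unfolding S_pC_def theta_edges_def by auto
  have nbr: "nbr p C \<subseteq> S_pC S p C"
    "\<And>x y. x \<in> nbr p C \<Longrightarrow> y \<in> S_pC S p C - nbr p C \<Longrightarrow>
        dist p (ray_proj p (u C) x) \<le> dist p (ray_proj p (u C) y)"
    using assms(5,10) pq(1) unfolding theta_choice_def by blast+
  have "finite F"
    using assms(1,6) theta_edges_subset_Pow[OF assms(5)] by (meson finite_Pow_iff finite_subset)
  then have "card {r \<in> nbr p C. {p, r} \<in> F} \<le> f" "card {r \<in> nbr p C. {q, r} \<in> F} \<le> f"
    using card_F_neighbours_le[OF assms(7)] pq by blast+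
  moreover have "card (nbr p C) = 2 * f + 1"
    by (rule card_nbr_eq_quota[OF assms(5,1) pq(1) assms(10) q_S_pC q_not_nbr])
  ultimately have small:
    "card {r \<in> nbr p C. {p, r} \<in> F} + card {r \<in> nbr p C. {q, r} \<in> F} < card (nbr p C)"
    by linarith
  have "finite (nbr p C)"
    using finite_subset[OF nbr(1) finite_S_pC[OF assms(1)]] .
  then obtain r where r: "r \<in> nbr p C" "{p, r} \<notin> F" "{q, r} \<notin> F"
    using exists_avoiding_two_small_sets[OF _ small] by blast
  have "r \<in> S_pC S p C" "r \<noteq> q"
    using r(1) nbr(1) q_not_nbr by auto
  moreover have "{p, r} \<in> theta_edges S Cs nbr"
    unfolding theta_edges_def using pq(1) assms(10) r(1) by blast
  moreover have "{r, q} \<in> KS_edges S"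
    using \<open>r \<in> S_pC S p C\<close> \<open>r \<noteq> q\<close> pq unfolding KS_edges_def S_pC_def by blast
  ultimately show ?thesis
    using r nbr(2)[OF r(1)] q_S_pC q_not_nbr by (auto simp: insert_commute)
qed

end
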